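(* Let $\alpha_1\ge\alpha_2\ge\cdots\ge\alpha_d>0$ and let $\beta_1,\dots,\beta_d$ be a permutation of $\alpha_1,\dots,\alpha_d$. Then \[ \sum_{i=1}^d(\sqrt{\alpha_i}-\sqrt{\beta_i})^2\le2\sum_{j=1}^{d-1}\frac{\alpha_j-\alpha_{j+1}}{\alpha_j}\sum_{i=1}^j(\alpha_i-\beta_i). \] *)

theory Defs
  imports Complex_Main "HOL-Combinatorics.Permutations"
begin

end

theory Submission
  imports Defs
begin

text \<open>
  Each summand is bounded on its own. For \<open>z \<le> y \<le> x\<close> one has
  \<open>(x - z)\<^sup>2 \<le> (y - z)\<^sup>2 + 2 (x\<^sup>2 - y\<^sup>2)/x\<^sup>2 ((x\<^sup>2 + y\<^sup>2)/2 - z\<^sup>2)\<close>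
  (and a mirror image moving \<open>z\<close> up), so walking from \<open>\<alpha>\<^sub>i\<close> to \<open>\<alpha>\<^sub>k\<close> one index at a time gives
  \<open>(\<surd>\<alpha>\<^sub>i - \<surd>\<alpha>\<^sub>k)\<^sup>2 \<le> 2 \<Sum>\<^sub>j c\<^sub>j \<epsilon>\<^sub>j (\<alpha>\<^sub>k - m\<^sub>j)\<close> with \<open>c\<^sub>j = (\<alpha>\<^sub>j - \<alpha>\<^sub>j\<^sub>+\<^sub>1)/\<alpha>\<^sub>j\<close>,
  \<open>m\<^sub>j = (\<alpha>\<^sub>j + \<alpha>\<^sub>j\<^sub>+\<^sub>1)/2\<close> and \<open>\<epsilon>\<^sub>j = \<plusminus>1\<close> when the move \<open>i \<mapsto> k\<close> crosses the cut between \<open>j\<close> and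
  \<open>j + 1\<close>. Summing over \<open>k = \<sigma> i\<close> and exchanging the sums, the coefficient of \<open>c\<^sub>j\<close> is
  \<open>\<Sum>\<^sub>i \<epsilon>\<^sub>j (\<beta>\<^sub>i - m\<^sub>j) = \<Sum>\<^sub>i\<^sub>\<le>\<^sub>j (\<alpha>\<^sub>i - \<beta>\<^sub>i)\<close>: a permutation moves as many items across
  each cut in one direction as in the other, so the constant \<open>m\<^sub>j\<close> cancels.
\<close>

lemma power2_diff_le_step_upper:
  fixes x y z :: real
  assumes "0 < z" "z \<le> y" "y \<le> x"
  shows "(x - z)^2 \<le> (y - z)^2 + 2 * ((x^2 - y^2) / x^2 * ((x^2 + y^2) / 2 - z^2))"
proof -
  have "x > 0" using assms by linarith
  have "(x + y) * z \<le> 2 * x^2"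
    using assms mult_mono[of "x + y" "2 * x" z x] by (simp add: power2_eq_square)
  moreover have "z^2 \<le> y^2" using assms by (simp add: power_mono)
  ultimately have "0 \<le> (x - y) * ((x + y) * (y^2 - z^2) + z * (2 * x^2 - (x + y) * z)) / x^2"
    using assms by (intro divide_nonneg_nonneg mult_nonneg_nonneg add_nonneg_nonneg) auto
  moreover have "(y - z)^2 + 2 * ((x^2 - y^2) / x^2 * ((x^2 + y^2) / 2 - z^2)) - (x - z)^2
      = (x - y) * ((x + y) * (y^2 - z^2) + z * (2 * x^2 - (x + y) * z)) / x^2"
    using \<open>x > 0\<close> by (simp add: field_simps power2_eq_square)
  ultimately show ?thesis by linarith
qed

lemma power2_diff_le_step_lower:
  fixes x y z :: real
  assumes "0 < z" "z \<le> y" "y \<le> x"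
  shows "(x - z)^2 \<le> (x - y)^2 + 2 * ((y^2 - z^2) / y^2 * (x^2 - (y^2 + z^2) / 2))"
proof -
  have "y > 0" using assms by linarith
  have "(x - y)^2 + 2 * ((y^2 - z^2) / y^2 * (x^2 - (y^2 + z^2) / 2)) - (x - z)^2
      = (y - z) * (2 * (x - y) * (x * y + x * z + y * z) + (y - z) * z * (2 * y + z)) / y^2"
    using \<open>y > 0\<close> by (simp add: field_simps power2_eq_square)
  moreover have "0 \<le> (y - z) * (2 * (x - y) * (x * y + x * z + y * z) + (y - z) * z * (2 * y + z)) / y^2"
    using assms by (intro divide_nonneg_nonneg mult_nonneg_nonneg add_nonneg_nonneg) auto
  ultimately show ?thesis by linarith
qed

lemma sqrt_diff_sq_le_sum_fixed_lower:
  fixes v :: "nat \<Rightarrow> real"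
  assumes "\<And>j. p \<le> j \<Longrightarrow> j \<le> q \<Longrightarrow> 0 < v j"
    and "\<And>i j. p \<le> i \<Longrightarrow> i \<le> j \<Longrightarrow> j \<le> q \<Longrightarrow> v j \<le> v i"
    and "p \<le> q"
  shows "(sqrt (v p) - sqrt (v q))^2
    \<le> 2 * (\<Sum>j\<in>{p..<q}. (v j - v (j+1)) / v j * ((v j + v (j+1)) / 2 - v q))"
  using assms
proof (induction "q - p" arbitrary: p)
  case 0
  then show ?case by simp
next
  case (Suc n)
  then have "p < q" by linarith
  have IH: "(sqrt (v (Suc p)) - sqrt (v q))^2
      \<le> 2 * (\<Sum>j\<in>{Suc p..<q}. (v j - v (j+1)) / v j * ((v j + v (j+1)) / 2 - v q))"
    using Suc \<open>p < q\<close> by (intro Suc.hyps) auto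
  have "0 < v q" "v q \<le> v (Suc p)" "v (Suc p) \<le> v p" "0 < v p"
    using Suc.prems \<open>p < q\<close> by auto
  then have "(sqrt (v p) - sqrt (v q))^2 \<le> (sqrt (v (Suc p)) - sqrt (v q))^2
      + 2 * ((v p - v (Suc p)) / v p * ((v p + v (Suc p)) / 2 - v q))"
    using power2_diff_le_step_upper[of "sqrt (v q)" "sqrt (v (Suc p))" "sqrt (v p)"] by simp
  moreover have "{p..<q} = insert p {Suc p..<q}" using \<open>p < q\<close> by auto
  ultimately show ?case using IH by (simp add: algebra_simps)
qed

lemma sqrt_diff_sq_le_sum_fixed_upper:
  fixes v :: "nat \<Rightarrow> real"
  assumes "\<And>j. p \<le> j \<Longrightarrow> j \<le> q \<Longrightarrow> 0 < v j"
    and "\<And>i j. p \<le> i \<Longrightarrow> i \<le> j \<Longrightarrow> j \<le> q \<Longrightarrow> v j \<le> v i"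
    and "p \<le> q"
  shows "(sqrt (v p) - sqrt (v q))^2
    \<le> 2 * (\<Sum>j\<in>{p..<q}. (v j - v (j+1)) / v j * (v p - (v j + v (j+1)) / 2))"
  using assms
proof (induction "q - p" arbitrary: q)
  case 0
  then show ?case by simp
next
  case (Suc n)
  then obtain r where q: "q = Suc r" and "p \<le> r" by (cases q) auto
  have IH: "(sqrt (v p) - sqrt (v r))^2
      \<le> 2 * (\<Sum>j\<in>{p..<r}. (v j - v (j+1)) / v j * (v p - (v j + v (j+1)) / 2))"
    using Suc q \<open>p \<le> r\<close> by (intro Suc.hyps) auto
  have "0 < v q" "v q \<le> v r" "v r \<le> v p" "0 < v r"
    using Suc.prems q \<open>p \<le> r\<close> by auto
  then have "(sqrt (v p) - sqrt (v q))^2 \<le> (sqrt (v p) - sqrt (v r))^2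
      + 2 * ((v r - v q) / v r * (v p - (v r + v q) / 2))"
    using power2_diff_le_step_lower[of "sqrt (v q)" "sqrt (v r)" "sqrt (v p)"] by simp
  then show ?case using IH \<open>p \<le> r\<close> unfolding q by (simp add: algebra_simps)
qed

definition level_crossing :: "nat \<Rightarrow> nat \<Rightarrow> nat \<Rightarrow> real" where
  "level_crossing i k j = of_bool (k \<le> j) - of_bool (i \<le> j)"

lemma sqrt_diff_sq_le_crossing_sum:
  fixes \<alpha> :: "nat \<Rightarrow> real"
  assumes mono: "\<And>i j. 1 \<le> i \<Longrightarrow> i \<le> j \<Longrightarrow> j \<le> d \<Longrightarrow> \<alpha> j \<le> \<alpha> i"
    and pos: "\<And>i. 1 \<le> i \<Longrightarrow> i \<le> d \<Longrightarrow> \<alpha> i > 0"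
    and i: "i \<in> {1..d}" and k: "k \<in> {1..d}"
  shows "(sqrt (\<alpha> i) - sqrt (\<alpha> k))^2 \<le> 2 * (\<Sum>j=1..d-1. (\<alpha> j - \<alpha> (j+1)) / \<alpha> j
           * (level_crossing i k j * (\<alpha> k - (\<alpha> j + \<alpha> (j+1))/2)))"
    (is "_ \<le> 2 * sum ?t _")
proof (cases i k rule: linorder_cases)
  case less
  have "sum ?t {1..d-1} = (\<Sum>j\<in>{i..<k}. (\<alpha> j - \<alpha> (j+1)) / \<alpha> j * ((\<alpha> j + \<alpha> (j+1))/2 - \<alpha> k))"
    using i k less by (intro sum.mono_neutral_cong_right) (auto simp: level_crossing_def)
  moreover have "(sqrt (\<alpha> i) - sqrt (\<alpha> k))^2
      \<le> 2 * (\<Sum>j\<in>{i..<k}. (\<alpha> j - \<alpha> (j+1)) / \<alpha> j * ((\<alpha> j + \<alpha> (j+1))/2 - \<alpha> k))"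
    using i k less by (intro sqrt_diff_sq_le_sum_fixed_lower) (auto intro: pos mono)
  ultimately show ?thesis by simp
next
  case equal
  then show ?thesis by (simp add: level_crossing_def)
next
  case greater
  have "sum ?t {1..d-1} = (\<Sum>j\<in>{k..<i}. (\<alpha> j - \<alpha> (j+1)) / \<alpha> j * (\<alpha> k - (\<alpha> j + \<alpha> (j+1))/2))"
    using i k greater by (intro sum.mono_neutral_cong_right) (auto simp: level_crossing_def)
  moreover have "(sqrt (\<alpha> k) - sqrt (\<alpha> i))^2
      \<le> 2 * (\<Sum>j\<in>{k..<i}. (\<alpha> j - \<alpha> (j+1)) / \<alpha> j * (\<alpha> k - (\<alpha> j + \<alpha> (j+1))/2))"
    using i k greater by (intro sqrt_diff_sq_le_sum_fixed_upper) (auto intro: pos mono)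
  ultimately show ?thesis by (simp add: power2_commute)
qed

lemma sum_prefix_eq_indicator:
  fixes g :: "nat \<Rightarrow> real"
  assumes "j \<le> d"
  shows "(\<Sum>i=1..j. g i) = (\<Sum>i=1..d. of_bool (i \<le> j) * g i)"
  using assms by (intro sum.mono_neutral_cong_left) auto

lemma sum_prefix_diff_permutes:
  fixes f :: "nat \<Rightarrow> real"
  assumes perm: "\<sigma> permutes {1..d}" and "j \<le> d"
  shows "(\<Sum>i=1..j. f i - f (\<sigma> i)) = (\<Sum>i=1..d. level_crossing i (\<sigma> i) j * (f (\<sigma> i) - m))"
proof -
  have prefix: "(\<Sum>i=1..j. g i) = (\<Sum>i=1..d. of_bool (\<sigma> i \<le> j) * g (\<sigma> i))" for g :: "nat \<Rightarrow> real"
    using sum_prefix_eq_indicator[OF \<open>j \<le> d\<close>] sum.permute[OF perm, of "\<lambda>i. of_bool (i \<le> j) * g i"]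
    by (simp add: comp_def)
  have prefix_perm: "(\<Sum>i=1..j. g (\<sigma> i)) = (\<Sum>i=1..d. of_bool (i \<le> j) * g (\<sigma> i))" for g :: "nat \<Rightarrow> real"
    using sum_prefix_eq_indicator[OF \<open>j \<le> d\<close>] .
  have "(\<Sum>i=1..j. f i - f (\<sigma> i)) = (\<Sum>i=1..j. f i) - (\<Sum>i=1..j. f (\<sigma> i))"
    by (rule sum_subtractf)
  also have "\<dots> = (\<Sum>i=1..d. level_crossing i (\<sigma> i) j * f (\<sigma> i))"
    unfolding prefix[of f] prefix_perm[of f]
    by (simp add: level_crossing_def left_diff_distrib sum_subtractf)
  finally have "(\<Sum>i=1..j. f i - f (\<sigma> i)) = (\<Sum>i=1..d. level_crossing i (\<sigma> i) j * f (\<sigma> i))" .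
  moreover have "(\<Sum>i=1..d. level_crossing i (\<sigma> i) j) = 0"
    using prefix[of "\<lambda>_. 1"] prefix_perm[of "\<lambda>_. 1"]
    by (simp add: level_crossing_def sum_subtractf)
  then have "(\<Sum>i=1..d. level_crossing i (\<sigma> i) j * m) = 0"
    by (simp flip: sum_distrib_right)
  ultimately show ?thesis by (simp add: right_diff_distrib sum_subtractf)
qed

theorem mainTheorem14:
  fixes d :: nat and \<alpha> :: "nat \<Rightarrow> real" and \<sigma> :: "nat \<Rightarrow> nat"
  assumes mono: "\<And>i j. 1 \<le> i \<Longrightarrow> i \<le> j \<Longrightarrow> j \<le> d \<Longrightarrow> \<alpha> j \<le> \<alpha> i"
    and pos: "\<And>i. 1 \<le> i \<Longrightarrow> i \<le> d \<Longrightarrow> \<alpha> i > 0"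
    and perm: "\<sigma> permutes {1..d}"
  shows "(\<Sum>i=1..d. (sqrt (\<alpha> i) - sqrt (\<alpha> (\<sigma> i)))^2)
    \<le> 2 * (\<Sum>j=1..d-1. (\<alpha> j - \<alpha> (j+1)) / \<alpha> j * (\<Sum>i=1..j. \<alpha> i - \<alpha> (\<sigma> i)))"
proof -
  define w where "w j = (\<alpha> j - \<alpha> (j+1)) / \<alpha> j" for j
  define t where "t j i = level_crossing i (\<sigma> i) j * (\<alpha> (\<sigma> i) - (\<alpha> j + \<alpha> (j+1))/2)" for j i
  have "(\<Sum>i=1..d. (sqrt (\<alpha> i) - sqrt (\<alpha> (\<sigma> i)))^2) \<le> (\<Sum>i=1..d. 2 * (\<Sum>j=1..d-1. w j * t j i))"
    unfolding w_def t_def using permutes_in_image[OF perm]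
    by (intro sum_mono mult_left_mono sqrt_diff_sq_le_crossing_sum[OF mono pos]) auto
  also have "\<dots> = 2 * (\<Sum>j=1..d-1. w j * (\<Sum>i=1..d. t j i))"
    by (simp add: sum_distrib_left) (rule sum.swap)
  also have "\<dots> = 2 * (\<Sum>j=1..d-1. w j * (\<Sum>i=1..j. \<alpha> i - \<alpha> (\<sigma> i)))"
    unfolding t_def using sum_prefix_diff_permutes[OF perm]
    by (intro arg_cong[where f = "(*) 2"] sum.cong refl) auto
  finally show ?thesis by (simp add: w_def)
qed

end
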